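(* Let $s\in\mathbb N$, $D>0$, and let $g_1,\dots,g_s$ be measurable functions on $[0,1]$ with $|g_i(x)|\le D$ for all $i$ and $x\in[0,1]$, such that $$\max_{\theta}\Big|\int_0^1\prod_{i=1}^s\Big(\frac{g_i(x)}{D}\Big)^{\theta_i}dx\Big|<2^{-s},$$ where the maximum is over all $\theta=(\theta_i)_{i=1}^s\in\{0,1\}^s$ with $\theta\neq(0,\dots,0)$. Then there exist measurable functions $h_1,\dots,h_s$ on $[0,2]$ such that $h_i=g_i$ on $[0,1]$, $|h_i(x)|\le D$ for all $x\in[0,2]$, and $\{h_i\}_{i=1}^s$ is multiplicative on $[0,2]$, i.e. $\int_0^2 h_{i_1}(x)\cdots h_{i_k}(x)\,dx=0$ for every $k\ge1$ and all $1\le i_1<\dots<i_k\le s$. *)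

theory Defs
  imports "HOL-Analysis.Analysis"
begin

end

(*
  On (1,2] the extension is a step function: the interval is cut into disjoint pieces A_E,
  one for every sign pattern E \<subseteq> {1..s}, and on A_E the function h_i is -D for i \<in> E and D
  otherwise. Then the integral of the product of the h_i, i \<in> S, over (1,2] is
  D^|S| * sum_E |A_E| chi_S(E) with the Walsh characters chi_S(E) = (-1)^|S \<inter> E|.
  Walsh-Fourier inversion on the cube {-1,1}^s gives lengths
  |A_E| = 2^-s (1 - sum_{T \<noteq> {}} a_T chi_T(E)), a_T the integral over [0,1] of the product
  of the g_i/D, i \<in> T, for which these integrals cancel the ones over [0,1] exactly; the
  hypothesis |a_T| < 2^-s makes these lengths nonnegative, and they add up to 1.
*)

theory Submission
  imports Defs
begin

text \<open>The Walsh character of \<open>S\<close> at the sign vector that is \<open>-1\<close> exactly on \<open>E\<close>.\<close>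

definition walsh :: "'a set \<Rightarrow> 'a set \<Rightarrow> real" where
  "walsh S E = (-1) ^ card (S \<inter> E)"

lemma walsh_eq_prod:
  assumes "finite S"
  shows "walsh S E = (\<Prod>i\<in>S. if i \<in> E then -1 else 1)"
  using assms by (simp add: walsh_def prod.If_cases)

lemma walsh_commute: "walsh S E = walsh E S"
  by (simp add: walsh_def Int_commute)

lemma sum_walsh_mult_walsh:
  assumes "finite U" "S \<subseteq> U" "T \<subseteq> U"
  shows "(\<Sum>E\<in>Pow U. walsh S E * walsh T E) = (if S = T then 2 ^ card U else 0)"
proof -
  define c where "c i = (if i \<in> S then -1 else 1) * (if i \<in> T then -1 else (1::real))" for i
  have "walsh S E * walsh T E = (\<Prod>i\<in>E. c i)" if "E \<in> Pow U" for E
  proof -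
    have "finite E" using that assms(1) finite_subset by blast
    then show ?thesis by (simp add: walsh_commute[of _ E] walsh_eq_prod c_def prod.distrib)
  qed
  then have "(\<Sum>E\<in>Pow U. walsh S E * walsh T E) = (\<Prod>i\<in>U. c i + 1)"
    using assms(1) prod_add[of U c "\<lambda>_. 1"] by simp
  also have "\<dots> = (if S = T then 2 ^ card U else 0)"
  proof (cases "S = T")
    case True
    then have "c i + 1 = 2" for i by (simp add: c_def)
    then show ?thesis using True by simp
  next
    case False
    then obtain i where "i \<in> U" "i \<in> S \<longleftrightarrow> i \<notin> T" using assms by blast
    then show ?thesis using assms(1) False by (auto simp: c_def prod_zero_iff)
  qed
  finally show ?thesis .
qed

lemma sum_walsh_inversion:
  assumes "finite U" "S \<subseteq> U"
  shows "(\<Sum>E\<in>Pow U. (\<Sum>T\<in>Pow U. c T * walsh T E) * walsh S E) = 2 ^ card U * c S"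
proof -
  have "(\<Sum>E\<in>Pow U. (\<Sum>T\<in>Pow U. c T * walsh T E) * walsh S E)
      = (\<Sum>T\<in>Pow U. c T * (\<Sum>E\<in>Pow U. walsh T E * walsh S E))"
    unfolding sum_distrib_left sum_distrib_right by (subst sum.swap) (simp add: mult.assoc)
  also have "\<dots> = (\<Sum>T\<in>Pow U. if T = S then c S * 2 ^ card U else 0)"
    using assms by (intro sum.cong refl) (simp add: sum_walsh_mult_walsh)
  also have "\<dots> = 2 ^ card U * c S"
    using assms by simp
  finally show ?thesis .
qed

lemma obtain_distribution_with_walsh_coefficients:
  fixes m :: "'a set \<Rightarrow> real"
  assumes U: "finite U"
    and small: "\<And>T. T \<subseteq> U \<Longrightarrow> T \<noteq> {} \<Longrightarrow> \<bar>m T\<bar> \<le> 1 / 2 ^ card U"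
  obtains p where "\<And>E. E \<in> Pow U \<Longrightarrow> 0 \<le> p E" "(\<Sum>E\<in>Pow U. p E) = 1"
    "\<And>S. S \<subseteq> U \<Longrightarrow> S \<noteq> {} \<Longrightarrow> (\<Sum>E\<in>Pow U. p E * walsh S E) = m S"
proof -
  \<comment> \<open>Walsh-Fourier inversion, with coefficient 1 at the trivial character\<close>
  define c where "c T = (if T = {} then 1 else m T)" for T
  define p where "p E = (\<Sum>T\<in>Pow U. c T * walsh T E) / 2 ^ card U" for E
  have coeff: "(\<Sum>E\<in>Pow U. p E * walsh S E) = c S" if "S \<subseteq> U" for S
    using sum_walsh_inversion[OF U that, of c]
    by (simp add: p_def sum_divide_distrib[symmetric])
  have nonneg: "0 \<le> p E" for E
  proof -
    let ?N = "Pow U - {{}}"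
    have "\<bar>\<Sum>T\<in>?N. m T * walsh T E\<bar> \<le> (\<Sum>T\<in>?N. 1 / 2 ^ card U)"
      using small by (intro order.trans[OF sum_abs] sum_mono) (auto simp: abs_mult walsh_def)
    also have "\<dots> \<le> 1"
      using U card_mono[of "Pow U" ?N] by (simp add: card_Pow field_simps)
    finally have "0 \<le> 1 + (\<Sum>T\<in>?N. m T * walsh T E)"
      by linarith
    also have "1 + (\<Sum>T\<in>?N. m T * walsh T E) = (\<Sum>T\<in>Pow U. c T * walsh T E)"
      using U by (simp add: sum.remove[of "Pow U" "{}"] c_def walsh_def)
    finally show ?thesis
      by (simp add: p_def)
  qed
  have total: "(\<Sum>E\<in>Pow U. p E) = 1"
    using coeff[of "{}"] by (simp add: c_def walsh_def)
  have "(\<Sum>E\<in>Pow U. p E * walsh S E) = m S" if "S \<subseteq> U" "S \<noteq> {}" for S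
    using coeff[OF that(1)] that(2) by (simp add: c_def)
  with nonneg total show thesis
    by (intro that[of p])
qed

lemma exists_disjoint_family_with_measures:
  fixes p :: "'j \<Rightarrow> real"
  assumes "finite J" "\<forall>j\<in>J. 0 \<le> p j"
  shows "\<exists>A. disjoint_family_on A J \<and> (\<forall>j\<in>J. A j \<in> sets lborel \<and> A j \<subseteq> {a<..a + sum p J}
             \<and> emeasure lborel (A j) = ennreal (p j))"
  using assms
proof (induction J rule: finite_induct)
  case empty
  then show ?case by (simp add: disjoint_family_on_def)
next
  case (insert j J)
  let ?b = "a + sum p J"
  obtain A where disj: "disjoint_family_on A J"
    and A: "\<forall>k\<in>J. A k \<in> sets lborel \<and> A k \<subseteq> {a<..?b} \<and> emeasure lborel (A k) = ennreal (p k)"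
    using insert by auto
  have nonneg: "0 \<le> p j" "0 \<le> sum p J"
    using insert.prems by (auto intro: sum_nonneg)
  define A' where "A' = A(j := {?b<..?b + p j})"
  have A'_J: "A' k = A k" if "k \<in> J" for k
    using that insert.hyps(2) by (auto simp: A'_def)
  have A'_j: "A' j = {?b<..?b + p j}"
    by (simp add: A'_def)
  have "A' k \<subseteq> {a<..?b}" if "k \<in> J" for k
    using A that by (simp add: A'_J)
  then have "A' j \<inter> (\<Union>k\<in>J. A' k) = {}"
    unfolding A'_j by fastforce
  moreover have "disjoint_family_on A' J"
    using disj A'_J by (simp add: disjoint_family_on_def)
  ultimately have "disjoint_family_on A' (insert j J)"
    using insert.hyps(2) by (simp add: disjoint_family_on_insert)
  moreover have "A' k \<in> sets lborel \<and> A' k \<subseteq> {a<..a + sum p (insert j J)}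
      \<and> emeasure lborel (A' k) = ennreal (p k)" if "k \<in> insert j J" for k
  proof (cases "k = j")
    case True
    then show ?thesis
      using nonneg insert.hyps by (auto simp: A'_j)
  next
    case False
    then have "k \<in> J" "A k \<subseteq> {a<..?b}"
      using that A by auto
    then show ?thesis
      using A nonneg insert.hyps by (force simp: A'_J)
  qed
  ultimately show ?case by blast
qed

lemma sum_indicator_disjoint_family:
  fixes c :: "'j \<Rightarrow> real"
  assumes "finite J" "disjoint_family_on A J" "j \<in> J" "x \<in> A j"
  shows "(\<Sum>k\<in>J. indicator (A k) x * c k) = c j"
proof -
  have "(\<Sum>k\<in>J. indicator (A k) x * c k) = (\<Sum>k\<in>J. if k = j then c k else 0)"
    using assms(2-4) by (intro sum.cong refl) (auto simp: disjoint_family_on_def split: split_indicator)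
  then show ?thesis
    using assms(1,3) by simp
qed

lemma prod_sum_indicator_disjoint_family:
  fixes v :: "'i \<Rightarrow> 'j \<Rightarrow> real"
  assumes "finite J" "disjoint_family_on A J" "finite S" "S \<noteq> {}"
  shows "(\<Prod>i\<in>S. \<Sum>j\<in>J. indicator (A j) x * v i j) = (\<Sum>j\<in>J. indicator (A j) x * (\<Prod>i\<in>S. v i j))"
proof (cases "\<exists>j\<in>J. x \<in> A j")
  case True
  then obtain j where "j \<in> J" "x \<in> A j" by blast
  then show ?thesis
    by (simp only: sum_indicator_disjoint_family[OF assms(1,2)])
next
  case False
  then show ?thesis
    using assms(3,4) by (simp add: card_gt_0_iff)
qed

lemma obtain_step_functions_realizing_distribution:
  fixes p :: "'j \<Rightarrow> real" and v :: "'i \<Rightarrow> 'j \<Rightarrow> real" and a b :: real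
  assumes J: "finite J" and p: "\<And>j. j \<in> J \<Longrightarrow> 0 \<le> p j" "sum p J = b - a" and ab: "a < b"
    and v: "\<And>i j. j \<in> J \<Longrightarrow> \<bar>v i j\<bar> \<le> B"
  obtains \<phi> :: "'i \<Rightarrow> real \<Rightarrow> real"
  where "\<And>i. \<phi> i \<in> borel_measurable lborel" "\<And>i x. \<bar>\<phi> i x\<bar> \<le> B"
    "\<And>i x. x \<notin> {a<..b} \<Longrightarrow> \<phi> i x = 0"
    "\<And>S. finite S \<Longrightarrow> S \<noteq> {} \<Longrightarrow> integrable lborel (\<lambda>x. \<Prod>i\<in>S. \<phi> i x)"
    "\<And>S. finite S \<Longrightarrow> S \<noteq> {} \<Longrightarrow>
       integral\<^sup>L lborel (\<lambda>x. \<Prod>i\<in>S. \<phi> i x) = (\<Sum>j\<in>J. p j * (\<Prod>i\<in>S. v i j))"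
proof -
  have p_nonneg: "\<forall>j\<in>J. 0 \<le> p j"
    using p(1) by blast
  obtain A where disj: "disjoint_family_on A J"
    and A: "\<And>j. j \<in> J \<Longrightarrow> A j \<in> sets lborel" "\<And>j. j \<in> J \<Longrightarrow> A j \<subseteq> {a<..b}"
      "\<And>j. j \<in> J \<Longrightarrow> emeasure lborel (A j) = ennreal (p j)"
    using exists_disjoint_family_with_measures[where a = a, OF J p_nonneg] p(2) by auto
  define \<phi> where "\<phi> i x = (\<Sum>j\<in>J. indicator (A j) x * v i j)" for i x
  have int_A: "integrable lborel (\<lambda>x. indicator (A j) x * c)" if "j \<in> J" for j and c :: real
    using A[OF that] by simp
  have meas: "\<phi> i \<in> borel_measurable lborel" for i
    unfolding \<phi>_def using A(1)
    by (auto intro!: borel_measurable_sum borel_measurable_times borel_measurable_indicator)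
  obtain j0 where "j0 \<in> J"
    using p(2) ab by fastforce
  then have "0 \<le> B"
    using v by (meson abs_ge_zero order_trans)
  then have bound: "\<bar>\<phi> i x\<bar> \<le> B" for i x
  proof (cases "\<exists>j\<in>J. x \<in> A j")
    case True
    then obtain j where j: "j \<in> J" "x \<in> A j" by blast
    show ?thesis
      unfolding \<phi>_def sum_indicator_disjoint_family[OF J disj j] using v j(1) .
  qed (simp add: \<phi>_def)
  have support: "\<phi> i x = 0" if "x \<notin> {a<..b}" for i x
  proof -
    have "x \<notin> A j" if "j \<in> J" for j
      using A(2)[OF that] \<open>x \<notin> {a<..b}\<close> by blast
    then show ?thesis by (simp add: \<phi>_def)
  qed
  have "integrable lborel (\<lambda>x. \<Prod>i\<in>S. \<phi> i x)
      \<and> integral\<^sup>L lborel (\<lambda>x. \<Prod>i\<in>S. \<phi> i x) = (\<Sum>j\<in>J. p j * (\<Prod>i\<in>S. v i j))"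
    if "finite S" "S \<noteq> {}" for S
  proof -
    have prod_\<phi>: "(\<lambda>x. \<Prod>i\<in>S. \<phi> i x) = (\<lambda>x. \<Sum>j\<in>J. indicator (A j) x * (\<Prod>i\<in>S. v i j))"
      unfolding \<phi>_def using prod_sum_indicator_disjoint_family[OF J disj that] by simp
    have "integral\<^sup>L lborel (\<lambda>x. \<Sum>j\<in>J. indicator (A j) x * (\<Prod>i\<in>S. v i j))
        = (\<Sum>j\<in>J. integral\<^sup>L lborel (\<lambda>x. indicator (A j) x * (\<Prod>i\<in>S. v i j)))"
      by (intro Bochner_Integration.integral_sum int_A)
    also have "\<dots> = (\<Sum>j\<in>J. p j * (\<Prod>i\<in>S. v i j))"
      using A(1,3) p(1) by (intro sum.cong refl) (simp add: measure_def)
    finally show ?thesis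
      unfolding prod_\<phi> using int_A by auto
  qed
  with that meas bound support show thesis
    by blast
qed

lemma obtain_step_functions_with_prescribed_product_integrals:
  fixes M :: "'i set \<Rightarrow> real" and a b B :: real
  assumes U: "finite U" and ab: "b - a = 1" and B: "0 < B"
    and small: "\<And>T. T \<subseteq> U \<Longrightarrow> T \<noteq> {} \<Longrightarrow> \<bar>M T\<bar> \<le> B ^ card T / 2 ^ card U"
  obtains \<phi> :: "'i \<Rightarrow> real \<Rightarrow> real"
  where "\<And>i. \<phi> i \<in> borel_measurable lborel" "\<And>i x. \<bar>\<phi> i x\<bar> \<le> B"
    "\<And>i x. x \<notin> {a<..b} \<Longrightarrow> \<phi> i x = 0"
    "\<And>S. S \<subseteq> U \<Longrightarrow> S \<noteq> {} \<Longrightarrow> integrable lborel (\<lambda>x. \<Prod>i\<in>S. \<phi> i x)"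
    "\<And>S. S \<subseteq> U \<Longrightarrow> S \<noteq> {} \<Longrightarrow> integral\<^sup>L lborel (\<lambda>x. \<Prod>i\<in>S. \<phi> i x) = M S"
proof -
  have normalized_small: "\<bar>M T / B ^ card T\<bar> \<le> 1 / 2 ^ card U" if "T \<subseteq> U" "T \<noteq> {}" for T
    using small[OF that] B by (simp add: field_simps)
  obtain p :: "'i set \<Rightarrow> real"
    where p: "\<And>E. E \<in> Pow U \<Longrightarrow> 0 \<le> p E" "(\<Sum>E\<in>Pow U. p E) = 1"
      and p_walsh: "\<And>S. S \<subseteq> U \<Longrightarrow> S \<noteq> {} \<Longrightarrow> (\<Sum>E\<in>Pow U. p E * walsh S E) = M S / B ^ card S"
    by (rule obtain_distribution_with_walsh_coefficients[OF U normalized_small]) auto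
  let ?v = "\<lambda>i E. B * (if i \<in> E then -1 else 1)"
  have J: "finite (Pow U)" "sum p (Pow U) = b - a" "a < b"
    using U p(2) ab by auto
  have v: "\<And>i E. E \<in> Pow U \<Longrightarrow> \<bar>?v i E\<bar> \<le> B"
    using B by simp
  obtain \<phi> :: "'i \<Rightarrow> real \<Rightarrow> real"
    where \<phi>: "\<And>i. \<phi> i \<in> borel_measurable lborel" "\<And>i x. \<bar>\<phi> i x\<bar> \<le> B"
      "\<And>i x. x \<notin> {a<..b} \<Longrightarrow> \<phi> i x = 0"
      "\<And>S. finite S \<Longrightarrow> S \<noteq> {} \<Longrightarrow> integrable lborel (\<lambda>x. \<Prod>i\<in>S. \<phi> i x)"
    and \<phi>_prod: "\<And>S. finite S \<Longrightarrow> S \<noteq> {} \<Longrightarrow>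
      integral\<^sup>L lborel (\<lambda>x. \<Prod>i\<in>S. \<phi> i x) = (\<Sum>E\<in>Pow U. p E * (\<Prod>i\<in>S. ?v i E))"
    by (rule obtain_step_functions_realizing_distribution[where v = ?v, OF J(1) p(1) J(2,3) v]) auto
  show thesis
  proof (rule that[OF \<phi>(1-3)])
    fix S assume S: "S \<subseteq> U" "S \<noteq> {}"
    then have "finite S"
      using U finite_subset by blast
    then show "integrable lborel (\<lambda>x. \<Prod>i\<in>S. \<phi> i x)"
      using \<phi>(4) S(2) by blast
    have "(\<Prod>i\<in>S. ?v i E) = B ^ card S * walsh S E" for E
      using \<open>finite S\<close> by (simp add: prod.distrib walsh_eq_prod)
    then have "integral\<^sup>L lborel (\<lambda>x. \<Prod>i\<in>S. \<phi> i x) = (\<Sum>E\<in>Pow U. B ^ card S * (p E * walsh S E))"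
      using \<phi>_prod[OF \<open>finite S\<close> S(2)] by (simp add: ac_simps)
    also have "\<dots> = M S"
      using p_walsh[OF S] B by (simp add: sum_distrib_left[symmetric])
    finally show "integral\<^sup>L lborel (\<lambda>x. \<Prod>i\<in>S. \<phi> i x) = M S" .
  qed
qed

lemma indicator_glue:
  fixes f1 f2 :: "real \<Rightarrow> real" and a b c :: real
  assumes "a \<le> b" "b \<le> c" "\<And>x. x \<notin> {b<..c} \<Longrightarrow> f2 x = 0"
  shows "(\<lambda>x. indicator {a..c} x * (if x \<in> {a..b} then f1 x else f2 x))
           = (\<lambda>x. indicator {a..b} x * f1 x + f2 x)"
proof
  fix x
  show "indicator {a..c} x * (if x \<in> {a..b} then f1 x else f2 x) = indicator {a..b} x * f1 x + f2 x"
    using assms by (cases "x \<in> {b<..c}") (auto simp: indicator_def)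
qed

lemma set_borel_measurable_glue:
  fixes f1 f2 :: "real \<Rightarrow> real" and a b c :: real
  assumes "a \<le> b" "b \<le> c" "\<And>x. x \<notin> {b<..c} \<Longrightarrow> f2 x = 0"
    and "set_borel_measurable lborel {a..b} f1" "f2 \<in> borel_measurable lborel"
  shows "set_borel_measurable lborel {a..c} (\<lambda>x. if x \<in> {a..b} then f1 x else f2 x)"
  using assms(4,5) unfolding set_borel_measurable_def real_scaleR_def
  by (subst indicator_glue[OF assms(1-3)]) auto

lemma set_integral_glue:
  fixes f1 f2 :: "real \<Rightarrow> real" and a b c :: real
  assumes "a \<le> b" "b \<le> c" "\<And>x. x \<notin> {b<..c} \<Longrightarrow> f2 x = 0"
    and "set_integrable lborel {a..b} f1" "integrable lborel f2"
  shows "(LINT x:{a..c}|lborel. if x \<in> {a..b} then f1 x else f2 x)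
           = (LINT x:{a..b}|lborel. f1 x) + integral\<^sup>L lborel f2"
  using assms(4,5)
  unfolding set_integrable_def set_lebesgue_integral_def real_scaleR_def
  by (subst indicator_glue[OF assms(1-3)]) (simp_all add: Bochner_Integration.integral_add)

lemma set_integrable_prod_bounded:
  fixes g :: "'i \<Rightarrow> real \<Rightarrow> real" and a b :: real
  assumes "finite S" and meas: "\<And>i. i \<in> S \<Longrightarrow> set_borel_measurable lborel {a..b} (g i)"
    and bound: "\<And>i x. i \<in> S \<Longrightarrow> x \<in> {a..b} \<Longrightarrow> \<bar>g i x\<bar> \<le> B"
  shows "set_integrable lborel {a..b} (\<lambda>x. \<Prod>i\<in>S. g i x)"
proof (rule set_integrable_bound[where f = "\<lambda>_. B ^ card S"])
  show "set_integrable lborel {a..b} (\<lambda>_. B ^ card S)"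
    by (simp add: set_integrable_def emeasure_lborel_Icc_eq)
  have "g i \<in> borel_measurable (restrict_space lborel {a..b})" if "i \<in> S" for i
    using meas[OF that] by (simp add: set_borel_measurable_def borel_measurable_restrict_space_iff)
  then show "set_borel_measurable lborel {a..b} (\<lambda>x. \<Prod>i\<in>S. g i x)"
    unfolding set_borel_measurable_def
    by (subst borel_measurable_restrict_space_iff[symmetric]) (auto intro: borel_measurable_prod)
  have "\<bar>\<Prod>i\<in>S. g i x\<bar> \<le> B ^ card S" if "x \<in> {a..b}" for x
    using prod_mono[of S "\<lambda>i. \<bar>g i x\<bar>" "\<lambda>_. B"] bound[OF _ that] by (simp add: abs_prod)
  then show "AE x in lborel. x \<in> {a..b} \<longrightarrow> norm (\<Prod>i\<in>S. g i x) \<le> norm (B ^ card S)"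
    by (auto intro: order.trans[OF _ abs_ge_self])
qed

lemma set_integral_prod_glue:
  fixes g \<phi> :: "'i \<Rightarrow> real \<Rightarrow> real" and a b c B :: real
  assumes "a \<le> b" "b \<le> c" "finite S" "S \<noteq> {}"
    and "\<And>i. i \<in> S \<Longrightarrow> set_borel_measurable lborel {a..b} (g i)"
    and "\<And>i x. i \<in> S \<Longrightarrow> x \<in> {a..b} \<Longrightarrow> \<bar>g i x\<bar> \<le> B"
    and "\<And>i x. x \<notin> {b<..c} \<Longrightarrow> \<phi> i x = 0" "integrable lborel (\<lambda>x. \<Prod>i\<in>S. \<phi> i x)"
  shows "(LINT x:{a..c}|lborel. \<Prod>i\<in>S. if x \<in> {a..b} then g i x else \<phi> i x)
           = (LINT x:{a..b}|lborel. \<Prod>i\<in>S. g i x) + integral\<^sup>L lborel (\<lambda>x. \<Prod>i\<in>S. \<phi> i x)"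
proof -
  have prod_if: "(\<Prod>i\<in>S. if x \<in> {a..b} then g i x else \<phi> i x)
      = (if x \<in> {a..b} then \<Prod>i\<in>S. g i x else \<Prod>i\<in>S. \<phi> i x)" for x
    by (simp del: atLeastAtMost_iff)
  show ?thesis
    unfolding prod_if
  proof (rule set_integral_glue)
    show "(\<Prod>i\<in>S. \<phi> i x) = 0" if "x \<notin> {b<..c}" for x
      using assms(3,4,7) that by (simp add: card_gt_0_iff)
    show "set_integrable lborel {a..b} (\<lambda>x. \<Prod>i\<in>S. g i x)"
      using assms(3,5,6) by (rule set_integrable_prod_bounded)
  qed (use assms in auto)
qed

lemma prod_power_indicator:
  assumes "finite U" "T \<subseteq> U"
  shows "(\<Prod>i\<in>U. f i ^ (if i \<in> T then 1 else 0)) = (\<Prod>i\<in>T. f i)"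
proof -
  have "(\<Prod>i\<in>U. f i ^ (if i \<in> T then 1 else 0)) = (\<Prod>i\<in>U. if i \<in> T then f i else 1)"
    by (rule prod.cong) auto
  also have "\<dots> = (\<Prod>i\<in>T. f i)"
    using assms by (simp add: prod.inter_restrict[symmetric] Int_absorb1)
  finally show ?thesis .
qed

theorem lemma4p3:
  fixes s :: nat and D :: real and g :: "nat \<Rightarrow> real \<Rightarrow> real"
  assumes Dpos: "D > 0"
    and meas: "\<And>i. i \<in> {1..s} \<Longrightarrow> set_borel_measurable lborel {0..1} (g i)"
    and bound: "\<And>i x. i \<in> {1..s} \<Longrightarrow> x \<in> {0..1} \<Longrightarrow> \<bar>g i x\<bar> \<le> D"
    and small: "\<And>\<theta> :: nat \<Rightarrow> nat.
        (\<forall>i\<in>{1..s}. \<theta> i \<in> {0,1}) \<Longrightarrow> (\<exists>i\<in>{1..s}. \<theta> i \<noteq> 0) \<Longrightarrow>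
        \<bar>LINT x:{0..1}|lborel. (\<Prod>i=1..s. (g i x / D) ^ \<theta> i)\<bar> < 2 powi (- int s)"
  shows "\<exists>h :: nat \<Rightarrow> real \<Rightarrow> real.
           (\<forall>i\<in>{1..s}. set_borel_measurable lborel {0..2} (h i)
                        \<and> (\<forall>x\<in>{0..1}. h i x = g i x)
                        \<and> (\<forall>x\<in>{0..2}. \<bar>h i x\<bar> \<le> D))
         \<and> (\<forall>S. S \<subseteq> {1..s} \<and> S \<noteq> {} \<longrightarrow>
                (LINT x:{0..2}|lborel. (\<Prod>i\<in>S. h i x)) = 0)"
proof -
  define a where "a T = (LINT x:{0..1}|lborel. \<Prod>i\<in>T. g i x)" for T
  have a_small: "\<bar>- a T\<bar> \<le> D ^ card T / 2 ^ card {1..s}" if T: "T \<subseteq> {1..s}" "T \<noteq> {}" for T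
  proof -
    have "\<exists>i\<in>{1..s}. (if i \<in> T then 1 else 0 :: nat) \<noteq> 0"
      using T by auto
    then have "\<bar>LINT x:{0..1}|lborel. (\<Prod>i=1..s. (g i x / D) ^ (if i \<in> T then 1 else 0))\<bar> < 2 powi (- int s)"
      by (intro small) auto
    then show ?thesis
      using T Dpos by (simp add: prod_power_indicator prod_dividef a_def power_int_minus_divide field_simps)
  qed
  obtain \<phi> :: "nat \<Rightarrow> real \<Rightarrow> real"
    where \<phi>: "\<And>i. \<phi> i \<in> borel_measurable lborel" "\<And>i x. \<bar>\<phi> i x\<bar> \<le> D"
      "\<And>i x. x \<notin> {1<..2} \<Longrightarrow> \<phi> i x = 0"
      "\<And>S. S \<subseteq> {1..s} \<Longrightarrow> S \<noteq> {} \<Longrightarrow> integrable lborel (\<lambda>x. \<Prod>i\<in>S. \<phi> i x)"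
      "\<And>S. S \<subseteq> {1..s} \<Longrightarrow> S \<noteq> {} \<Longrightarrow> integral\<^sup>L lborel (\<lambda>x. \<Prod>i\<in>S. \<phi> i x) = - a S"
    using obtain_step_functions_with_prescribed_product_integrals[where a = 1 and b = 2,
        OF finite_atLeastAtMost _ Dpos a_small]
    by simp blast
  define h where "h i x = (if x \<in> {0..1} then g i x else \<phi> i x)" for i x
  show ?thesis
  proof (intro exI[of _ h] conjI ballI allI impI)
    fix i x assume i: "i \<in> {1..s}"
    show "set_borel_measurable lborel {0..2} (h i)"
      unfolding h_def using meas[OF i] \<phi> by (intro set_borel_measurable_glue) auto
    show "x \<in> {0..1} \<Longrightarrow> h i x = g i x" "x \<in> {0..2} \<Longrightarrow> \<bar>h i x\<bar> \<le> D"
      using bound[OF i] \<phi>(2) by (simp_all add: h_def)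
  next
    fix S assume S: "S \<subseteq> {1..s} \<and> S \<noteq> {}"
    then have "(LINT x:{0..2}|lborel. \<Prod>i\<in>S. h i x) = a S + integral\<^sup>L lborel (\<lambda>x. \<Prod>i\<in>S. \<phi> i x)"
      unfolding h_def a_def using meas bound \<phi> finite_subset[of S "{1..s}"]
      by (intro set_integral_prod_glue[where B = D]) auto
    then show "(LINT x:{0..2}|lborel. \<Prod>i\<in>S. h i x) = 0"
      using S \<phi>(5) by simp
  qed
qed

end
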